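(* Let $n$ be a positive integer, $a_1,\dots,a_n\in\mathbb{R}$ and $k>0$. Let $F_{n,k}(s)=\prod_{j=1}^{n}(s+ia_j)^{-k}$ and let $f_{n,k}(t)=\mathcal{L}^{-1}(F_{n,k})(t)$ be its inverse Laplace transform. Then \[|f_{n,k}(t)|\le\frac{t^{nk-1}}{\Gamma(nk)}\qquad\text{for all }t\in(0,\infty).\]
   Context: $\mathcal{L}(f)(s)=\int_0^\infty e^{-st}f(t)\,dt$; powers $(s+ia_j)^{-k}$ are principal branches for $\mathrm{Re}\,s>0$. *)

theory Defs
  imports "HOL-Analysis.Analysis"
begin

text \<open>F_{n,k}(s) = prod_{j=1}^n (s + i a_j)^(-k), principal branch (complex powr uses Ln).\<close>
definition F_nk :: "nat \<Rightarrow> real \<Rightarrow> (nat \<Rightarrow> real) \<Rightarrow> complex \<Rightarrow> complex" where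
  "F_nk n k a s = (\<Prod>j\<in>{1..n}. (s + \<i> * of_real (a j)) powr (- of_real k))"

definition is_inverse_laplace :: "(real \<Rightarrow> complex) \<Rightarrow> (complex \<Rightarrow> complex) \<Rightarrow> bool" where
  "is_inverse_laplace f F \<longleftrightarrow> continuous_on {0<..} f \<and>
     (\<forall>s. Re s > 0 \<longrightarrow>
        (\<lambda>t. exp (- s * of_real t) * f t) absolutely_integrable_on {0<..} \<and>
        integral {0<..} (\<lambda>t. exp (- s * of_real t) * f t) = F s)"

end

theory Submission
  imports
    Defs
    "HOL-Complex_Analysis.Cauchy_Integral_Formula"
    "HOL-Probability.Distributions"
    "HOL-Real_Asymp.Real_Asymp"
begin

text \<open>
  A continuous \<open>f\<close> whose Laplace transform \<open>F\<close> converges absolutely for \<open>Re s > 0\<close> is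
  recovered by the Post--Widder formula \<open>f t = lim (-1)^m / m! * (m/t)^(m+1) * F^(m) (m/t)\<close>:
  differentiating under the integral turns the right-hand side into \<open>\<integral> K_m(u) f(u) du\<close>
  with the Erlang densities \<open>K_m(u) = (m/t)^(m+1) u^m e^(-mu/t) / m!\<close>, which concentrate at \<open>t\<close>.
  For \<open>F = F_{n,k}\<close> and real \<open>\<sigma> > 0\<close>, Leibniz' rule and Vandermonde's identity for rising
  factorials give \<open>|F^(m)(\<sigma>)| \<le> (nk)^(m) \<sigma>^(-nk-m)\<close>, since \<open>|\<sigma> + i a_j| \<ge> \<sigma>\<close>.
  At \<open>\<sigma> = m/t\<close> the approximants are therefore bounded by \<open>(nk)^(m) / m! * (m/t)^(1-nk)\<close>,
  which tends to \<open>t^(nk-1) / \<Gamma>(nk)\<close> by Gauss' product formula for \<open>\<Gamma>\<close>.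
\<close>

lemma power_div_fact_le_exp:
  fixes x :: real
  assumes "x \<ge> 0"
  shows "x ^ m / fact m \<le> exp x"
proof -
  have sums: "(\<lambda>n. x ^ n /\<^sub>R fact n) sums exp x"
    by (rule exp_converges)
  have "sum (\<lambda>n. x ^ n /\<^sub>R fact n) {m} \<le> suminf (\<lambda>n. x ^ n /\<^sub>R fact n)"
    by (rule sum_le_suminf) (use sums assms in \<open>auto simp: sums_iff\<close>)
  thus ?thesis
    using sums by (simp add: sums_iff divide_inverse mult.commute)
qed

lemma power_mult_exp_neg_le:
  fixes x c :: real
  assumes "x \<ge> 0" "c > 0"
  shows "x ^ m * exp (- c * x) \<le> fact m / c ^ m"
proof -
  have "(c * x) ^ m / fact m \<le> exp (c * x)"
    using assms by (intro power_div_fact_le_exp) simp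
  hence "c ^ m * (x ^ m * exp (- c * x)) \<le> fact m"
    by (simp add: exp_minus field_simps power_mult_distrib)
  thus ?thesis
    using assms by (simp add: field_simps mult.commute)
qed

lemma norm_exp_minus_one_minus_le:
  fixes w :: complex
  shows "norm (exp w - 1 - w) \<le> norm w ^ 2 * exp (norm w)"
  using Taylor_exp_field[of w 1] by (simp add: algebra_simps power2_eq_square)

lemma has_field_derivative_quadratic_remainder:
  fixes g :: "'a::real_normed_field \<Rightarrow> 'a"
  assumes "r > 0"
    and remainder: "\<And>s. norm (s - s0) < r \<Longrightarrow> norm (g s - g s0 - (s - s0) * D) \<le> C * norm (s - s0) ^ 2"
  shows "(g has_field_derivative D) (at s0)"
  unfolding has_field_derivative_iff
proof (rule LIM_zero_cancel, rule Lim_null_comparison)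
  show "eventually (\<lambda>s. norm ((g s - g s0) / (s - s0) - D) \<le> C * norm (s - s0)) (at s0)"
    unfolding eventually_at
  proof (intro exI[of _ r] conjI ballI impI)
    fix s assume "s \<in> UNIV" and "s \<noteq> s0 \<and> dist s s0 < r"
    hence ne: "s \<noteq> s0" and close: "norm (s - s0) < r"
      by (auto simp: dist_norm)
    have "norm ((g s - g s0) / (s - s0) - D) = norm (g s - g s0 - (s - s0) * D) / norm (s - s0)"
      using ne by (simp add: field_simps norm_divide)
    also have "\<dots> \<le> C * norm (s - s0) ^ 2 / norm (s - s0)"
      using remainder[OF close] by (intro divide_right_mono) auto
    also have "\<dots> = C * norm (s - s0)"
      using ne by (simp add: power2_eq_square)
    finally show "norm ((g s - g s0) / (s - s0) - D) \<le> C * norm (s - s0)" .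
  qed (use assms in auto)
  show "((\<lambda>s. C * norm (s - s0)) \<longlongrightarrow> 0) (at s0)"
    by (rule tendsto_eq_intros refl | simp)+
qed

lemma eventually_nhds_Re_pos:
  assumes "Re s > 0"
  shows "eventually (\<lambda>z. Re z > 0) (nhds s)"
proof -
  have "eventually (\<lambda>z. z \<in> {z. Re z > 0}) (nhds s)"
    using assms by (intro eventually_nhds_in_open open_halfspace_Re_gt) auto
  thus ?thesis
    by simp
qed

lemma Re_pos_not_nonpos_Reals:
  "Re z > 0 \<Longrightarrow> z \<notin> \<real>\<^sub>\<le>\<^sub>0"
  by (auto simp: complex_nonpos_Reals_iff)

lemma pochhammer_nonneg_of_nonneg:
  fixes x :: "'a::linordered_semidom"
  shows "0 \<le> x \<Longrightarrow> 0 \<le> pochhammer x m"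
  by (simp add: pochhammer_prod prod_nonneg)


section \<open>Derivatives of \<open>F\<^sub>n\<^sub>,\<^sub>k\<close> on the positive axis\<close>

lemma higher_deriv_shifted_powr:
  fixes b k :: real
  assumes "Re s > 0"
  shows "(deriv ^^ j) (\<lambda>s. (s + \<i> * of_real b) powr (- of_real k)) s =
    (-1) ^ j * of_real (pochhammer k j) * (s + \<i> * of_real b) powr (- of_real k - of_nat j)"
  using assms
proof (induction j arbitrary: s)
  case 0
  then show ?case by simp
next
  case (Suc j)
  define E where "E s = (-1) ^ j * of_real (pochhammer k j) *
      (s + \<i> * of_real b) powr (- of_real k - of_nat j)" for s
  have "eventually (\<lambda>z. (deriv ^^ j) (\<lambda>s. (s + \<i> * of_real b) powr (- of_real k)) z = E z) (nhds s)"
    using eventually_nhds_Re_pos[OF Suc.prems] by eventually_elim (use Suc.IH in \<open>simp add: E_def\<close>)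
  hence "(deriv ^^ Suc j) (\<lambda>s. (s + \<i> * of_real b) powr (- of_real k)) s = deriv E s"
    by (simp add: deriv_cong_ev)
  also have "\<dots> = (-1) ^ j * of_real (pochhammer k j) *
      ((- of_real k - of_nat j) * (s + \<i> * of_real b) powr (- of_real k - of_nat j - 1))"
    unfolding E_def using Re_pos_not_nonpos_Reals[of "s + \<i> * of_real b"] Suc.prems
    by (intro DERIV_imp_deriv) (auto intro!: derivative_eq_intros)
  also have "\<dots> = (-1) ^ Suc j * of_real (pochhammer k (Suc j)) *
      (s + \<i> * of_real b) powr (- of_real k - of_nat (Suc j))"
    by (simp add: pochhammer_Suc algebra_simps)
  finally show ?case .
qed

lemma norm_higher_deriv_shifted_powr_le:
  fixes b k \<sigma> :: real
  assumes "\<sigma> > 0" "k \<ge> 0"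
  shows "norm ((deriv ^^ j) (\<lambda>s. (s + \<i> * of_real b) powr (- of_real k)) (of_real \<sigma>))
    \<le> pochhammer k j * \<sigma> powr (- k - real j)"
proof -
  have "norm ((deriv ^^ j) (\<lambda>s. (s + \<i> * of_real b) powr (- of_real k)) (of_real \<sigma>)) =
      pochhammer k j * norm (of_real \<sigma> + \<i> * of_real b) powr (- k - real j)"
    using assms pochhammer_nonneg_of_nonneg[of k j]
    by (subst higher_deriv_shifted_powr) (auto simp: norm_mult norm_power norm_powr_real_powr')
  also have "\<dots> \<le> pochhammer k j * \<sigma> powr (- k - real j)"
  proof (rule mult_left_mono)
    have "\<sigma> \<le> norm (of_real \<sigma> + \<i> * of_real b)"
      using complex_Re_le_cmod[of "of_real \<sigma> + \<i> * of_real b"] by simp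
    thus "norm (of_real \<sigma> + \<i> * of_real b) powr (- k - real j) \<le> \<sigma> powr (- k - real j)"
      using assms by (intro powr_mono2') auto
  qed (use assms pochhammer_nonneg_of_nonneg in auto)
  finally show ?thesis .
qed

lemma F_nk_Suc:
  "F_nk (Suc n) k a = (\<lambda>s. F_nk n k a s * (s + \<i> * of_real (a (Suc n))) powr (- of_real k))"
  by (auto simp: F_nk_def fun_eq_iff prod.nat_ivl_Suc' mult.commute)

lemma F_nk_holomorphic_on:
  "F_nk n k a holomorphic_on {z. Re z > 0}"
  unfolding F_nk_def by (intro holomorphic_intros) (auto intro!: Re_pos_not_nonpos_Reals)

lemma norm_higher_deriv_F_nk_le:
  fixes \<sigma> k :: real
  assumes "\<sigma> > 0" "k \<ge> 0"
  shows "norm ((deriv ^^ m) (F_nk n k a) (of_real \<sigma>))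
    \<le> pochhammer (real n * k) m * \<sigma> powr (- (real n * k) - real m)"
proof (induction n arbitrary: m)
  case 0
  have "F_nk 0 k a = (\<lambda>s. 1)"
    by (simp add: F_nk_def fun_eq_iff)
  then show ?case
    using assms by (cases m) (auto simp: pochhammer_0_left)
next
  case (Suc n)
  define h where "h = (\<lambda>s. (s + \<i> * of_real (a (Suc n))) powr (- of_real k))"
  have "h holomorphic_on {z. Re z > 0}"
    unfolding h_def by (intro holomorphic_intros) (auto intro!: Re_pos_not_nonpos_Reals)
  hence "(deriv ^^ m) (\<lambda>s. F_nk n k a s * h s) (of_real \<sigma>) = (\<Sum>i = 0..m. of_nat (m choose i) *
      (deriv ^^ i) (F_nk n k a) (of_real \<sigma>) * (deriv ^^ (m - i)) h (of_real \<sigma>))"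
    by (rule higher_deriv_mult[OF F_nk_holomorphic_on _ open_halfspace_Re_gt]) (use assms in auto)
  moreover have "F_nk (Suc n) k a = (\<lambda>s. F_nk n k a s * h s)"
    by (simp add: F_nk_Suc h_def)
  ultimately have "(deriv ^^ m) (F_nk (Suc n) k a) (of_real \<sigma>) = (\<Sum>i = 0..m. of_nat (m choose i) *
      (deriv ^^ i) (F_nk n k a) (of_real \<sigma>) * (deriv ^^ (m - i)) h (of_real \<sigma>))"
    by simp
  also have "norm \<dots> \<le> (\<Sum>i = 0..m. real (m choose i) *
      (pochhammer (real n * k) i * \<sigma> powr (- (real n * k) - real i)) *
      (pochhammer k (m - i) * \<sigma> powr (- k - real (m - i))))"
    using Suc.IH norm_higher_deriv_shifted_powr_le[OF assms, where b = "a (Suc n)"]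
    by (intro order.trans[OF norm_sum sum_mono])
       (simp only: norm_mult norm_of_nat, intro mult_mono mult_nonneg_nonneg,
        auto simp: h_def pochhammer_nonneg_of_nonneg assms simp del: of_nat_diff)
  also have "\<dots> = (\<Sum>i = 0..m. real (m choose i) * pochhammer (real n * k) i * pochhammer k (m - i)) *
      \<sigma> powr (- (real (Suc n) * k) - real m)"
    unfolding sum_distrib_right
    by (intro sum.cong refl)
       (use assms in \<open>simp add: powr_add[symmetric] of_nat_diff algebra_simps\<close>)
  also have "(\<Sum>i = 0..m. real (m choose i) * pochhammer (real n * k) i * pochhammer k (m - i)) =
      pochhammer (real (Suc n) * k) m"
    using pochhammer_binomial_sum[of "real n * k" k m] by (simp add: atLeast0AtMost algebra_simps)
  finally show ?case .
qed


section \<open>The Post--Widder kernel\<close>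

definition post_widder_kernel :: "real \<Rightarrow> nat \<Rightarrow> real \<Rightarrow> real" where
  "post_widder_kernel t m u = (real m / t) ^ Suc m * u ^ m * exp (- (real m / t) * u) / fact m"

lemma erlang_has_integral:
  fixes l :: real
  assumes "l > 0"
  shows "((\<lambda>u. l ^ Suc m * u ^ m * exp (- l * u) / fact m) has_integral 1) {0<..}"
proof -
  have "(erlang_density m l has_integral 1) UNIV"
    using nn_integral_erlang_ith_moment[OF assms, of m 0] assms
    by (intro nn_integral_has_integral) auto
  hence "((\<lambda>u. if u \<in> {0<..} then l ^ Suc m * u ^ m * exp (- l * u) / fact m else 0) has_integral 1) UNIV"
    by (rule has_integral_spike_finite[where S = "{0}", rotated -1]) (auto simp: erlang_density_def)
  thus ?thesis
    by (subst has_integral_restrict_UNIV[symmetric]) simp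
qed

lemma post_widder_kernel_has_integral:
  "t > 0 \<Longrightarrow> m > 0 \<Longrightarrow> (post_widder_kernel t m has_integral 1) {0<..}"
  unfolding post_widder_kernel_def[abs_def] by (rule erlang_has_integral) simp

lemma post_widder_kernel_nonneg:
  "t > 0 \<Longrightarrow> u > 0 \<Longrightarrow> post_widder_kernel t m u \<ge> 0"
  by (simp add: post_widder_kernel_def)

lemma two_mult_ln_le:
  fixes x :: real
  assumes "x > 0"
  shows "2 * ln x \<le> x"
proof -
  have "ln x = 2 * ln (sqrt x)"
    using assms by (simp add: ln_sqrt)
  also have "\<dots> \<le> 2 * (sqrt x - 1)"
    using ln_le_minus_one[of "sqrt x"] assms by simp
  finally have "2 * ln x \<le> x - (sqrt x - 2) ^ 2"
    using assms by (simp add: power2_eq_square algebra_simps)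
  thus ?thesis
    using zero_le_power2[of "sqrt x - 2"] by linarith
qed

lemma ln_one_minus_add_less:
  fixes d :: real
  assumes "0 < d" "d < 1"
  shows "ln (1 - d) + d < 0"
proof -
  have "ln (1 - d) = 2 * ln (sqrt (1 - d))"
    using assms by (simp add: ln_sqrt)
  also have "\<dots> \<le> 2 * (sqrt (1 - d) - 1)"
    using ln_le_minus_one[of "sqrt (1 - d)"] assms by simp
  also have "sqrt (1 - d) < sqrt ((1 - d / 2) ^ 2)"
    using assms by (subst real_sqrt_less_iff) (simp add: power2_eq_square algebra_simps)
  hence "2 * (sqrt (1 - d) - 1) < - d"
    using assms by simp
  finally show ?thesis
    by simp
qed

text \<open>\<open>ln x + 1 - x\<close> vanishes only at \<open>x = 1\<close> and is monotone on either side of it.\<close>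
lemma ln_add_one_minus_le:
  fixes x d :: real
  assumes "x > 0" and d: "0 < d" "d < 1" and away: "\<bar>x - 1\<bar> \<ge> d"
  shows "ln x + 1 - x \<le> max (ln (1 + d) - d) (ln (1 - d) + d)"
proof (cases "x \<ge> 1")
  case True
  hence x: "x \<ge> 1 + d"
    using away by simp
  have "ln x = ln (1 + d) + ln (x / (1 + d))"
    using d \<open>x > 0\<close> by (simp add: ln_div)
  also have "ln (x / (1 + d)) \<le> x / (1 + d) - 1"
    using \<open>x > 0\<close> d by (intro ln_le_minus_one) simp
  finally have "ln x + 1 - x \<le> ln (1 + d) - x * d / (1 + d)"
    using d by (simp add: field_simps)
  moreover have "x * d / (1 + d) \<ge> d"
    using x d mult_left_mono[OF x, of d] by (simp add: field_simps)
  ultimately show ?thesis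
    by simp
next
  case False
  hence x: "x \<le> 1 - d"
    using away by simp
  have "ln x = ln (1 - d) + ln (x / (1 - d))"
    using d \<open>x > 0\<close> by (simp add: ln_div)
  also have "ln (x / (1 - d)) \<le> x / (1 - d) - 1"
    using \<open>x > 0\<close> d by (intro ln_le_minus_one) simp
  finally have "ln x + 1 - x \<le> ln (1 - d) + x * d / (1 - d)"
    using d by (simp add: field_simps)
  moreover have "x * d / (1 - d) \<le> d"
    using x d \<open>x > 0\<close> mult_left_mono[OF x, of d] by (simp add: field_simps)
  ultimately show ?thesis
    by simp
qed

lemma post_widder_kernel_exp_le:
  fixes t u d :: real
  assumes t: "t > 0" and u: "u > 0" and d: "0 < d" "d < 1" and m: "m \<ge> 2"
    and away: "\<bar>u / t - 1\<bar> \<ge> d"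
  shows "post_widder_kernel t m u * exp (u / t)
    \<le> real m / t * exp 2 * exp ((real m - 2) * max (ln (1 + d) - d) (ln (1 - d) + d))"
proof -
  define x where "x = u / t"
  have x: "x > 0"
    using t u by (simp add: x_def)
  define r where "r = max (ln (1 + d) - d) (ln (1 - d) + d)"
  have power_eq: "x ^ m = exp (real m * ln x)"
    using x by (simp add: exp_of_nat_mult)
  have "post_widder_kernel t m u * exp (u / t)
      = real m / t * (real m ^ m / fact m) * (x ^ m * exp (- (real m - 1) * x))"
    using t by (simp add: post_widder_kernel_def x_def power_divide field_simps flip: exp_add)
  also have "\<dots> \<le> real m / t * exp (real m) * (x ^ m * exp (- (real m - 1) * x))"
    using t x by (intro mult_right_mono mult_left_mono power_div_fact_le_exp) auto
  also have "\<dots> = real m / t * exp ((real m - 2) * (ln x + 1 - x) + (2 * ln x + 2 - x))"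
    by (simp add: power_eq mult_exp_exp algebra_simps)
  also have "\<dots> \<le> real m / t * exp ((real m - 2) * r + 2)"
  proof -
    have "(real m - 2) * (ln x + 1 - x) \<le> (real m - 2) * r"
      using m ln_add_one_minus_le[OF x d] away by (intro mult_left_mono) (auto simp: r_def x_def)
    thus ?thesis
      using two_mult_ln_le[OF x] t by (intro mult_left_mono) auto
  qed
  finally show ?thesis
    by (simp add: r_def exp_add mult_ac)
qed

lemma post_widder_kernel_tail_small:
  fixes t d \<epsilon> :: real
  assumes "t > 0" "0 < d" "d < 1" "\<epsilon> > 0"
  shows "eventually (\<lambda>m. \<forall>u>0. \<bar>u / t - 1\<bar> \<ge> d \<longrightarrow> post_widder_kernel t m u * exp (u / t) \<le> \<epsilon>) sequentially"
proof -
  define r where "r = max (ln (1 + d) - d) (ln (1 - d) + d)"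
  have "r < 0"
    using ln_add_one_self_less_self[of d] ln_one_minus_add_less[of d] assms by (simp add: r_def)
  hence "(\<lambda>m. real m / t * exp 2 * exp ((real m - 2) * r)) \<longlonglongrightarrow> 0"
    using \<open>t > 0\<close> by real_asymp
  hence "eventually (\<lambda>m. real m / t * exp 2 * exp ((real m - 2) * r) < \<epsilon>) sequentially"
    using \<open>\<epsilon> > 0\<close> by (rule order_tendstoD)
  moreover have "eventually (\<lambda>m. m \<ge> 2) sequentially"
    by (rule eventually_ge_at_top)
  ultimately show ?thesis
  proof eventually_elim
    case (elim m)
    show ?case
    proof (intro allI impI)
      fix u :: real assume "u > 0" "\<bar>u / t - 1\<bar> \<ge> d"
      hence "post_widder_kernel t m u * exp (u / t) \<le> real m / t * exp 2 * exp ((real m - 2) * r)"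
        using post_widder_kernel_exp_le[OF \<open>t > 0\<close> _ \<open>0 < d\<close> \<open>d < 1\<close> elim(2)]
        by (simp add: r_def)
      thus "post_widder_kernel t m u * exp (u / t) \<le> \<epsilon>"
        using elim(1) by linarith
    qed
  qed
qed


section \<open>Derivatives of a Laplace transform and the Post--Widder inversion formula\<close>

definition laplace_moment :: "(real \<Rightarrow> complex) \<Rightarrow> nat \<Rightarrow> complex \<Rightarrow> complex" where
  "laplace_moment f m s = integral {0<..} (\<lambda>u. of_real u ^ m * exp (- s * of_real u) * f u)"

context
  fixes f :: "real \<Rightarrow> complex"
  assumes laplace_abs_integrable:
    "\<And>s. Re s > 0 \<Longrightarrow> (\<lambda>u. exp (- s * of_real u) * f u) absolutely_integrable_on {0<..}"
begin

lemma laplace_moment_integrand_abs_integrable: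
  assumes "Re s > 0"
  shows "(\<lambda>u. of_real u ^ m * exp (- s * of_real u) * f u) absolutely_integrable_on {0<..}"
proof -
  define \<sigma> where "\<sigma> = Re s / 2"
  have \<sigma>: "\<sigma> > 0"
    using assms by (simp add: \<sigma>_def)
  define g where "g u = of_real u ^ m * exp (- (s - of_real \<sigma>) * of_real u)" for u :: real
  have "(\<lambda>u. g u * (exp (- of_real \<sigma> * of_real u) * f u)) absolutely_integrable_on {0<..}"
  proof (rule absolutely_integrable_bounded_measurable_product[OF bilinear_times])
    show "g \<in> borel_measurable (lebesgue_on {0<..})"
      unfolding g_def by (intro continuous_imp_measurable_on_sets_lebesgue continuous_intros) auto
    show "bounded (g ` {0<..})"
    proof (rule boundedI)
      fix y assume "y \<in> g ` {0<..}"
      then obtain u where u: "u > 0" "y = g u"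
        by auto
      have "norm (g u) = u ^ m * exp (- \<sigma> * u)"
        using u by (simp add: g_def norm_mult norm_power \<sigma>_def algebra_simps)
      also have "\<dots> \<le> fact m / \<sigma> ^ m"
        using u \<sigma> by (intro power_mult_exp_neg_le) auto
      finally show "norm y \<le> fact m / \<sigma> ^ m"
        using u by simp
    qed
    show "(\<lambda>u. exp (- of_real \<sigma> * of_real u) * f u) absolutely_integrable_on {0<..}"
      using laplace_abs_integrable[of "of_real \<sigma>"] \<sigma> by simp
  qed simp
  moreover have "exp (- (s - of_real \<sigma>) * of_real u) * exp (- of_real \<sigma> * of_real u) = exp (- s * of_real u)"
    for u :: real
    by (simp add: algebra_simps flip: exp_add)
  ultimately show ?thesis
    by (simp add: g_def mult_ac)
qed

lemma laplace_moment_integrand_integrable: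
  "Re s > 0 \<Longrightarrow> (\<lambda>u. of_real u ^ m * exp (- s * of_real u) * f u) integrable_on {0<..}"
  using laplace_moment_integrand_abs_integrable by (rule set_lebesgue_integral_eq_integral(1))

lemma norm_laplace_moment_integrand_integrable:
  assumes "c > 0"
  shows "(\<lambda>u. u ^ m * exp (- c * u) * norm (f u)) integrable_on {0<..}"
proof -
  have "(\<lambda>u. norm (of_real u ^ m * exp (- of_real c * of_real u) * f u)) integrable_on {0<..}"
    using laplace_moment_integrand_abs_integrable[of "of_real c" m] assms
    by (simp add: absolutely_integrable_on_def)
  thus ?thesis
    by (rule integrable_eq) (auto simp: norm_mult norm_power exp_of_real[symmetric])
qed

lemma laplace_moment_remainder_le:
  assumes s0: "Re s0 > 0" and s: "norm (s - s0) < Re s0 / 2"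
  shows "norm (laplace_moment f m s - laplace_moment f m s0 - (s - s0) * - laplace_moment f (Suc m) s0)
    \<le> integral {0<..} (\<lambda>u. u ^ (m + 2) * exp (- (Re s0 / 2) * u) * norm (f u)) * norm (s - s0) ^ 2"
proof -
  define r where "r = Re s0"
  have "r - Re s \<le> norm (s - s0)"
    using abs_Re_le_cmod[of "s - s0"] by (simp add: r_def)
  hence Re_s: "Re s > 0"
    using s s0 by (simp add: r_def)
  define I where "I s' m' u = of_real u ^ m' * exp (- s' * of_real u) * f u" for s' m' u
  define G where "G u = I s m u - I s0 m u + (s - s0) * I s0 (Suc m) u" for u
  have integrable: "I s' m' integrable_on {0<..}" if "Re s' > 0" for s' m'
    unfolding I_def using that by (rule laplace_moment_integrand_integrable)
  have "laplace_moment f m s - laplace_moment f m s0 - (s - s0) * - laplace_moment f (Suc m) s0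
      = integral {0<..} G"
    unfolding G_def laplace_moment_def I_def[symmetric]
    using integrable[OF Re_s] integrable[OF s0]
    by (simp add: integral_add integral_diff integrable_diff integrable_on_mult_right)
  also have "norm \<dots> \<le> integral {0<..} (\<lambda>u. norm (s - s0) ^ 2 * (u ^ (m + 2) * exp (- (r / 2) * u) * norm (f u)))"
  proof (rule integral_norm_bound_integral)
    show "G integrable_on {0<..}"
      unfolding G_def using integrable[OF Re_s] integrable[OF s0]
      by (intro integrable_add integrable_diff integrable_on_mult_right) auto
    show "(\<lambda>u. norm (s - s0) ^ 2 * (u ^ (m + 2) * exp (- (r / 2) * u) * norm (f u))) integrable_on {0<..}"
      using s0 by (intro integrable_on_mult_right norm_laplace_moment_integrand_integrable) (simp add: r_def)
    fix u :: real assume u: "u \<in> {0<..}"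
    define w where "w = - (s - s0) * of_real u"
    have "exp (- s * of_real u) = exp (- s0 * of_real u) * exp w"
      by (simp add: w_def flip: exp_add) (simp add: algebra_simps)
    hence "G u = of_real u ^ m * f u * exp (- s0 * of_real u) * (exp w - 1 - w)"
      by (simp add: G_def I_def w_def algebra_simps)
    hence "norm (G u) = u ^ m * norm (f u) * exp (- r * u) * norm (exp w - 1 - w)"
      using u by (simp add: norm_mult norm_power r_def)
    also have "\<dots> \<le> u ^ m * norm (f u) * exp (- r * u) * (norm w ^ 2 * exp (norm w))"
      using u by (intro mult_left_mono norm_exp_minus_one_minus_le) auto
    also have "norm w = norm (s - s0) * u"
      using u by (simp add: w_def norm_mult norm_minus_commute)
    also have "u ^ m * norm (f u) * exp (- r * u) * ((norm (s - s0) * u) ^ 2 * exp (norm (s - s0) * u))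
        = norm (s - s0) ^ 2 * (u ^ (m + 2) * norm (f u) * exp (- r * u + norm (s - s0) * u))"
      unfolding exp_add by (simp add: power_mult_distrib power_add power2_eq_square algebra_simps)
    also have "\<dots> \<le> norm (s - s0) ^ 2 * (u ^ (m + 2) * norm (f u) * exp (- (r / 2) * u))"
      using u s by (intro mult_left_mono) (auto intro!: mult_left_mono simp: r_def algebra_simps)
    finally show "norm (G u) \<le> norm (s - s0) ^ 2 * (u ^ (m + 2) * exp (- (r / 2) * u) * norm (f u))"
      by (simp add: algebra_simps)
  qed
  finally show ?thesis
    by (simp add: r_def mult.commute)
qed

lemma has_field_derivative_laplace_moment:
  assumes "Re s0 > 0"
  shows "(laplace_moment f m has_field_derivative - laplace_moment f (Suc m) s0) (at s0)"
  by (rule has_field_derivative_quadratic_remainder[where r = "Re s0 / 2"],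
      use assms in simp, erule laplace_moment_remainder_le[OF assms])

lemma higher_deriv_laplace_transform:
  assumes F: "\<And>s. Re s > 0 \<Longrightarrow> F s = laplace_moment f 0 s" and "Re s > 0"
  shows "(deriv ^^ m) F s = (-1) ^ m * laplace_moment f m s"
  using \<open>Re s > 0\<close>
proof (induction m arbitrary: s)
  case 0
  then show ?case by (simp add: F)
next
  case (Suc m)
  have "eventually (\<lambda>z. (deriv ^^ m) F z = (-1) ^ m * laplace_moment f m z) (nhds s)"
    using eventually_nhds_Re_pos[OF Suc.prems] by eventually_elim (use Suc.IH in auto)
  hence "(deriv ^^ Suc m) F s = deriv (\<lambda>z. (-1) ^ m * laplace_moment f m z) s"
    by (simp add: deriv_cong_ev)
  also have "\<dots> = (-1) ^ m * - laplace_moment f (Suc m) s"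
    by (intro DERIV_imp_deriv DERIV_cmult has_field_derivative_laplace_moment Suc.prems)
  finally show ?case
    by simp
qed

lemma post_widder_integral_eq:
  "integral {0<..} (\<lambda>u. of_real (post_widder_kernel t m u) * f u)
    = of_real ((real m / t) ^ Suc m / fact m) * laplace_moment f m (of_real (real m / t))"
  unfolding laplace_moment_def integral_mult_right[symmetric]
  by (rule integral_cong) (simp add: post_widder_kernel_def exp_of_real[symmetric] mult_ac)

lemma post_widder_integrand_integrable:
  assumes "t > 0" "m > 0"
  shows "(\<lambda>u. of_real (post_widder_kernel t m u) * f u) integrable_on {0<..}"
proof -
  have "(\<lambda>u. of_real ((real m / t) ^ Suc m / fact m) *
      (of_real u ^ m * exp (- of_real (real m / t) * of_real u) * f u)) integrable_on {0<..}"
    using assms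
    by (intro integrable_on_mult_right laplace_moment_integrand_integrable)
       (auto intro: divide_pos_pos)
  thus ?thesis
    by (rule integrable_eq) (simp add: post_widder_kernel_def exp_of_real[symmetric] mult_ac)
qed

lemma exp_weighted_norm_integrable:
  assumes "c > 0"
  shows "(\<lambda>u. exp (- c * u) * (norm (f u) + b)) integrable_on {0<..}"
proof -
  have "(\<lambda>u. exp (- c * u) * norm (f u)) integrable_on {0<..}"
    using norm_laplace_moment_integrand_integrable[OF assms, of 0] by simp
  moreover have "(\<lambda>u. c * exp (- c * u)) integrable_on {0<..}"
    using erlang_has_integral[OF assms, of 0] by (auto simp: integrable_on_def)
  hence "(\<lambda>u. b / c * (c * exp (- c * u))) integrable_on {0<..}"
    by (rule integrable_on_mult_right)
  ultimately have "(\<lambda>u. exp (- c * u) * norm (f u) + b / c * (c * exp (- c * u))) integrable_on {0<..}"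
    by (rule integrable_add)
  thus ?thesis
    using assms by (simp add: algebra_simps)
qed

text \<open>
  Split \<open>\<integral> K\<^sub>m(u) (f u - f t) du\<close> at \<open>|u - t| = \<delta>\<close>: near \<open>t\<close> continuity of \<open>f\<close> applies, away
  from \<open>t\<close> the kernel is dominated by a small multiple of the integrable \<open>exp (-u/t) (|f u| + |f t|)\<close>.
\<close>
lemma post_widder_inversion:
  assumes cont: "continuous_on {0<..} f" and t: "t > 0"
  shows "(\<lambda>m. integral {0<..} (\<lambda>u. of_real (post_widder_kernel t m u) * f u)) \<longlonglongrightarrow> f t"
proof (rule LIMSEQ_I)
  fix \<epsilon> :: real assume \<epsilon>: "\<epsilon> > 0"
  obtain \<delta> where \<delta>: "\<delta> > 0" "\<And>u. u \<in> {0<..} \<Longrightarrow> dist u t < \<delta> \<Longrightarrow> dist (f u) (f t) < \<epsilon> / 2"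
    using cont t \<epsilon> unfolding continuous_on_iff by (metis greaterThan_iff half_gt_zero)
  define d where "d = min \<delta> (t / 2) / t"
  have d: "0 < d" "d < 1"
    using \<delta> t by (auto simp: d_def min_def field_simps)
  define W where "W u = exp (- (1 / t) * u) * (norm (f u) + norm (f t))" for u
  have W: "W integrable_on {0<..}"
    unfolding W_def using t by (intro exp_weighted_norm_integrable) simp
  define A where "A = integral {0<..} W"
  have A: "A \<ge> 0"
    unfolding A_def using W by (intro integral_nonneg) (auto simp: W_def)
  define \<eta> where "\<eta> = \<epsilon> / 2 / (A + 1)"
  have \<eta>: "\<eta> > 0" "\<eta> * A < \<epsilon> / 2"
    using \<epsilon> A by (auto simp: \<eta>_def field_simps)
  have "eventually (\<lambda>m. m > 0 \<and> (\<forall>u>0. \<bar>u / t - 1\<bar> \<ge> d \<longrightarrow> post_widder_kernel t m u * exp (u / t) \<le> \<eta>))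
      sequentially"
    using post_widder_kernel_tail_small[OF t d \<eta>(1)] eventually_gt_at_top[of 0]
    by eventually_elim auto
  then obtain N where N: "\<And>m. m \<ge> N \<Longrightarrow> m > 0 \<and>
      (\<forall>u>0. \<bar>u / t - 1\<bar> \<ge> d \<longrightarrow> post_widder_kernel t m u * exp (u / t) \<le> \<eta>)"
    unfolding eventually_sequentially by blast
  show "\<exists>N. \<forall>m\<ge>N. norm (integral {0<..} (\<lambda>u. of_real (post_widder_kernel t m u) * f u) - f t) < \<epsilon>"
  proof (intro exI allI impI)
    fix m assume "m \<ge> N"
    note m = N[OF this]
    define K where "K = post_widder_kernel t m"
    have K: "(K has_integral 1) {0<..}"
      unfolding K_def using t m by (intro post_widder_kernel_has_integral) auto
    have "((\<lambda>u. of_real (K u)) has_integral of_real 1) {0<..}"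
      using has_integral_linear[OF K bounded_linear_of_real] by (simp add: o_def)
    hence Kf: "((\<lambda>u. of_real (K u) * f t) has_integral f t) {0<..}"
      using has_integral_mult_left[of "\<lambda>u. of_real (K u)" 1 "{0<..}" "f t"] by simp
    have Kf_integrable: "(\<lambda>u. of_real (K u) * f u) integrable_on {0<..}"
      unfolding K_def using t m by (intro post_widder_integrand_integrable) auto
    have "integral {0<..} (\<lambda>u. of_real (K u) * f u) - f t =
        integral {0<..} (\<lambda>u. of_real (K u) * f u - of_real (K u) * f t)"
      by (simp only: integral_diff[OF Kf_integrable has_integral_integrable[OF Kf]] integral_unique[OF Kf])
    also have "norm \<dots> \<le> integral {0<..} (\<lambda>u. \<epsilon> / 2 * K u + \<eta> * W u)"
    proof (rule integral_norm_bound_integral)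
      show "(\<lambda>u. of_real (K u) * f u - of_real (K u) * f t) integrable_on {0<..}"
        using Kf_integrable Kf by (intro integrable_diff) (auto simp: has_integral_integrable)
      show "(\<lambda>u. \<epsilon> / 2 * K u + \<eta> * W u) integrable_on {0<..}"
        using K W by (intro integrable_add integrable_on_mult_right) (auto simp: has_integral_integrable)
      fix u :: real assume "u \<in> {0<..}"
      hence u: "u > 0" by simp
      have K0: "K u \<ge> 0" and W0: "W u \<ge> 0"
        using u t by (auto simp: K_def W_def post_widder_kernel_nonneg)
      have "norm (of_real (K u) * f u - of_real (K u) * f t) = K u * norm (f u - f t)"
        using K0 by (simp add: norm_mult flip: right_diff_distrib)
      also have "\<dots> \<le> \<epsilon> / 2 * K u + \<eta> * W u"
      proof (cases "\<bar>u - t\<bar> < \<delta>")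
        case True
        hence "norm (f u - f t) \<le> \<epsilon> / 2"
          using \<delta>(2)[of u] u by (simp add: dist_norm dist_real_def)
        hence "norm (f u - f t) * K u \<le> \<epsilon> / 2 * K u"
          using K0 by (rule mult_right_mono)
        hence "K u * norm (f u - f t) \<le> \<epsilon> / 2 * K u"
          by (metis mult.commute)
        moreover have "0 \<le> \<eta> * W u"
          using \<eta> W0 by simp
        ultimately show ?thesis
          by linarith
      next
        case False
        have "d \<le> \<bar>u - t\<bar> / t"
          using False t by (auto simp: d_def intro: divide_right_mono)
        also have "\<bar>u - t\<bar> / t = \<bar>u / t - 1\<bar>"
          using t by (simp add: field_simps abs_divide)
        finally have "K u * exp (u / t) \<le> \<eta>"
          using m u by (simp add: K_def)
        have "K u * norm (f u - f t) \<le> K u * (norm (f u) + norm (f t))"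
          using mult_left_mono[OF norm_triangle_ineq4 K0] .
        also have "\<dots> = (K u * exp (u / t)) * W u"
        proof -
          have "exp (u / t) * exp (- (1 / t) * u) = 1"
            by (simp flip: exp_add)
          moreover have "(K u * exp (u / t)) * W u
              = K u * ((exp (u / t) * exp (- (1 / t) * u)) * (norm (f u) + norm (f t)))"
            unfolding W_def by (simp only: mult_ac)
          ultimately show ?thesis
            by (metis mult_1_left)
        qed
        also have "\<dots> \<le> \<eta> * W u"
          using mult_right_mono[OF \<open>K u * exp (u / t) \<le> \<eta>\<close> W0] .
        finally have "K u * norm (f u - f t) \<le> \<eta> * W u" .
        moreover have "0 \<le> \<epsilon> / 2 * K u"
          using K0 \<epsilon> by simp
        ultimately show ?thesis
          by linarith
      qed
      finally show "norm (of_real (K u) * f u - of_real (K u) * f t) \<le> \<epsilon> / 2 * K u + \<eta> * W u" .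
    qed
    also have "\<dots> = \<epsilon> / 2 * integral {0<..} K + \<eta> * A"
      unfolding A_def using K W
      by (simp add: integral_add integral_mult_right integrable_on_mult_right has_integral_integrable)
    also have "\<dots> < \<epsilon>"
      using \<eta> integral_unique[OF K] by simp
    finally show "norm (integral {0<..} (\<lambda>u. of_real (post_widder_kernel t m u) * f u) - f t) < \<epsilon>"
      by (simp add: K_def)
  qed
qed

end


section \<open>The estimate for \<open>F\<^sub>n\<^sub>,\<^sub>k\<close>\<close>

lemma pochhammer_div_fact_powr_tendsto:
  fixes c t :: real
  assumes c: "c > 0" and t: "t > 0"
  shows "(\<lambda>m. pochhammer c m / fact m * (real m / t) powr (1 - c)) \<longlonglongrightarrow> t powr (c - 1) / Gamma c"
proof -
  have "(\<lambda>m. rGamma_series c m * (real m / (c + real m)) * t powr (c - 1))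
      \<longlonglongrightarrow> rGamma c * 1 * t powr (c - 1)"
    using c by (intro tendsto_intros) real_asymp
  moreover have "eventually (\<lambda>m. rGamma_series c m * (real m / (c + real m)) * t powr (c - 1) =
      pochhammer c m / fact m * (real m / t) powr (1 - c)) sequentially"
    using eventually_gt_at_top[of 0]
  proof eventually_elim
    case (elim m)
    have "c + real m \<noteq> 0"
      using c by simp
    hence "rGamma_series c m * (real m / (c + real m)) = pochhammer c m * real m / (fact m * real m powr c)"
      using elim by (simp add: rGamma_series_def pochhammer_Suc powr_def)
    hence "rGamma_series c m * (real m / (c + real m)) * t powr (c - 1)
        = pochhammer c m * real m / (fact m * real m powr c) * t powr (c - 1)"
      by simp
    also have "\<dots> = pochhammer c m / fact m * (real m / t) powr (1 - c)"
      using elim c t by (simp add: powr_divide powr_diff field_simps)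
    finally show ?case .
  qed
  ultimately show ?thesis
    by (simp add: rGamma_inverse_Gamma divide_inverse mult.commute Lim_transform_eventually)
qed

lemma norm_post_widder_integral_F_nk_le:
  assumes "is_inverse_laplace f (F_nk n k a)" "k \<ge> 0" "t > 0" "m > 0"
  shows "norm (integral {0<..} (\<lambda>u. of_real (post_widder_kernel t m u) * f u))
    \<le> pochhammer (real n * k) m / fact m * (real m / t) powr (1 - real n * k)"
proof -
  define \<sigma> where "\<sigma> = real m / t"
  have \<sigma>: "\<sigma> > 0"
    using assms by (simp add: \<sigma>_def)
  have integrable: "\<And>s. Re s > 0 \<Longrightarrow> (\<lambda>u. exp (- s * of_real u) * f u) absolutely_integrable_on {0<..}"
    and F: "\<And>s. Re s > 0 \<Longrightarrow> F_nk n k a s = laplace_moment f 0 s"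
    using assms(1) by (auto simp: is_inverse_laplace_def laplace_moment_def)
  have "norm (integral {0<..} (\<lambda>u. of_real (post_widder_kernel t m u) * f u))
      = \<sigma> ^ Suc m / fact m * norm ((deriv ^^ m) (F_nk n k a) (of_real \<sigma>))"
    using \<sigma> assms post_widder_integral_eq[OF integrable] higher_deriv_laplace_transform[OF integrable F]
    by (simp add: \<sigma>_def norm_mult norm_power norm_divide)
  also have "\<dots> \<le> \<sigma> ^ Suc m / fact m * (pochhammer (real n * k) m * \<sigma> powr (- (real n * k) - real m))"
    using \<sigma> assms by (intro mult_left_mono norm_higher_deriv_F_nk_le) auto
  also have "\<sigma> ^ Suc m = \<sigma> powr (1 + real m)"
    using \<sigma> by (simp add: powr_add powr_realpow)
  also have "\<sigma> powr (1 + real m) / fact m * (pochhammer (real n * k) m * \<sigma> powr (- (real n * k) - real m))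
      = pochhammer (real n * k) m / fact m * \<sigma> powr (1 - real n * k)"
    by (simp add: powr_add[symmetric])
  finally show ?thesis
    by (simp add: \<sigma>_def)
qed

theorem lemma11:
  fixes n :: nat and a :: "nat \<Rightarrow> real" and k :: real and f :: "real \<Rightarrow> complex"
  assumes "n > 0" and "k > 0"
    and "is_inverse_laplace f (F_nk n k a)"
  shows "\<forall>t>0. norm (f t) \<le> t powr (real n * k - 1) / Gamma (real n * k)"
proof (intro allI impI)
  fix t :: real assume t: "t > 0"
  define c where "c = real n * k"
  have "(\<lambda>m. pochhammer c m / fact m * (real m / t) powr (1 - c)) \<longlonglongrightarrow> t powr (c - 1) / Gamma c"
    using assms t by (intro pochhammer_div_fact_powr_tendsto) (auto simp: c_def)
  moreover have "(\<lambda>m. norm (integral {0<..} (\<lambda>u. of_real (post_widder_kernel t m u) * f u))) \<longlonglongrightarrow> norm (f t)"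
    using assms(3) t
    by (intro tendsto_norm post_widder_inversion) (auto simp: is_inverse_laplace_def)
  moreover have "eventually (\<lambda>m. norm (integral {0<..} (\<lambda>u. of_real (post_widder_kernel t m u) * f u))
      \<le> pochhammer c m / fact m * (real m / t) powr (1 - c)) sequentially"
    using eventually_gt_at_top[of 0] unfolding c_def
    by eventually_elim (rule norm_post_widder_integral_F_nk_le[OF assms(3)], use assms t in auto)
  ultimately have "norm (f t) \<le> t powr (c - 1) / Gamma c"
    by (rule tendsto_le[OF trivial_limit_sequentially])
  thus "norm (f t) \<le> t powr (real n * k - 1) / Gamma (real n * k)"
    by (simp add: c_def)
qed

end
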